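(* Assume $b>1$, $\gamma:=kd/m-\alpha>0$ and $M>d/m$. Let $(S_t,Q_t)$ be the solution of the deterministic non-delayed system \[ S_t'=\big[\alpha-k\sigma(Q_t)\big]S_t,\qquad Q_t'=d-mQ_t+k(b-1)\sigma(Q_t)S_t, \] with initial condition $(S_0,Q_0)\in\big[0,\tfrac{mM-d}{k(b-1)M}\big]\times[d/m,M]$. Then there is a constant $c>0$ such that for all $t\ge0$, \[ |(S_t,Q_t)-E_0|\le c\,e^{-\eta t},\qquad E_0=(0,d/m),\quad \eta=\gamma\wedge\tfrac m2 . \]
   Context: Parameters $\alpha,k,d,m,M$ are positive constants. $\sigma:\mathbb R_+\to\mathbb R_+$ is a $C^\infty$ function with $\sigma(x)=x$ for $0\le x\le M$, $\sigma(x)=M+1$ for $x>M+1$, and $0\le\sigma'(x)\le C$ for some constant $C>1$. $|\cdot|$ is the Euclidean norm. *)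

theory Defs
  imports "HOL-Analysis.Analysis"
begin

definition smooth_nonneg :: "(real \<Rightarrow> real) \<Rightarrow> bool" where
  "smooth_nonneg f \<longleftrightarrow> (\<exists>D :: nat \<Rightarrow> real \<Rightarrow> real. D 0 = f \<and>
     (\<forall>n x. x \<ge> 0 \<longrightarrow> (D n has_real_derivative D (Suc n) x) (at x within {0..})))"

end

theory Submission imports Defs begin

(* The proof only uses comparison arguments for scalar differential
   inequalities, all reduced to one monotonicity principle (the mean value
   theorem):
   - a solution of y' <= -c y decays like exp(-c t), and a forcing term
     K exp(-gamma t) only degrades the rate to any eta <= gamma with eta < c;
   - a solution of the linear equation f' = a f with a bounded above cannot
     change sign;
   - a continuous induction ("barrier") principle.
   With these, the region {S >= 0, Q >= d/m} is shown to be invariant; there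
   sigma(Q) >= d/m gives S' <= -gamma S, hence S <= S(0) exp(-gamma t), and then
   Q - d/m satisfies a forced decay inequality with rate m, giving decay at
   rate eta = min gamma (m/2). *)

lemma nondecreasing_from_derivative:
  fixes f f' :: "real \<Rightarrow> real"
  assumes "0 \<le> a" "a \<le> b"
    and deriv: "\<And>s. a \<le> s \<Longrightarrow> s \<le> b \<Longrightarrow> (f has_real_derivative f' s) (at s within {0..})"
    and nonneg: "\<And>s. a \<le> s \<Longrightarrow> s \<le> b \<Longrightarrow> 0 \<le> f' s"
  shows "f a \<le> f b"
proof -
  have "\<exists>x\<in>{a..b}. f b - f a = (\<lambda>h. f' x * h) (b - a)"
  proof (rule mvt_very_simple[OF assms(2)])
    fix x assume "a \<le> x" "x \<le> b"
    then have "(f has_real_derivative f' x) (at x within {a..b})"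
      using deriv \<open>0 \<le> a\<close> by (meson DERIV_subset atLeastAtMost_iff atLeast_iff subsetI order_trans)
    then show "(f has_derivative (\<lambda>h. f' x * h)) (at x within {a..b})"
      by (simp add: has_field_derivative_def)
  qed
  then obtain x where "x \<in> {a..b}" "f b - f a = f' x * (b - a)" by auto
  moreover have "0 \<le> f' x * (b - a)" using nonneg[of x] \<open>x \<in> {a..b}\<close> \<open>a \<le> b\<close> by simp
  ultimately show ?thesis by simp
qed

lemma linear_decay:
  fixes y y' :: "real \<Rightarrow> real"
  assumes "0 \<le> a" "a \<le> t"
    and deriv: "\<And>s. a \<le> s \<Longrightarrow> s \<le> t \<Longrightarrow> (y has_real_derivative y' s) (at s within {0..})"
    and ineq: "\<And>s. a \<le> s \<Longrightarrow> s \<le> t \<Longrightarrow> y' s \<le> - c * y s"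
  shows "y t \<le> y a * exp (- c * (t - a))"
proof -
  let ?g = "\<lambda>s. - (y s * exp (c * (s - a)))"
  have "?g a \<le> ?g t"
  proof (rule nondecreasing_from_derivative[OF assms(1,2),
        where f' = "\<lambda>s. - ((y' s + c * y s) * exp (c * (s - a)))"])
    fix s assume s: "a \<le> s" "s \<le> t"
    show "(?g has_real_derivative - ((y' s + c * y s) * exp (c * (s - a)))) (at s within {0..})"
      by (rule derivative_eq_intros deriv[OF s] refl | simp add: algebra_simps)+
    show "0 \<le> - ((y' s + c * y s) * exp (c * (s - a)))"
      using ineq[OF s] by (simp add: mult_nonpos_nonneg)
  qed
  then have "y t * exp (c * (t - a)) \<le> y a" by simp
  then have "y t * exp (c * (t - a)) * exp (- c * (t - a)) \<le> y a * exp (- c * (t - a))"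
    by simp
  then show ?thesis by (simp add: mult.assoc exp_add[symmetric])
qed

text \<open>The comparison function is \<open>B exp (-\<eta> t)\<close>.\<close>
lemma forced_linear_decay:
  fixes y y' :: "real \<Rightarrow> real"
  assumes "0 \<le> t" "0 \<le> K" "\<eta> \<le> \<gamma>" "\<eta> < c"
    and deriv: "\<And>s. 0 \<le> s \<Longrightarrow> s \<le> t \<Longrightarrow> (y has_real_derivative y' s) (at s within {0..})"
    and ineq: "\<And>s. 0 \<le> s \<Longrightarrow> s \<le> t \<Longrightarrow> y' s \<le> - c * y s + K * exp (- \<gamma> * s)"
  shows "y t \<le> max (y 0) (K / (c - \<eta>)) * exp (- \<eta> * t)"
proof -
  define B where "B = max (y 0) (K / (c - \<eta>))"
  have "K = (c - \<eta>) * (K / (c - \<eta>))" using \<open>\<eta> < c\<close> by simp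
  also have "\<dots> \<le> (c - \<eta>) * B" using \<open>\<eta> < c\<close> by (intro mult_left_mono) (auto simp: B_def)
  finally have KB: "K \<le> (c - \<eta>) * B" .
  let ?w = "\<lambda>s. y s - B * exp (- \<eta> * s)"
  have "?w t \<le> ?w 0 * exp (- c * (t - 0))"
  proof (rule linear_decay[where y' = "\<lambda>s. y' s + \<eta> * B * exp (- \<eta> * s)"])
    fix s assume s: "0 \<le> s" "s \<le> t"
    show "(?w has_real_derivative y' s + \<eta> * B * exp (- \<eta> * s)) (at s within {0..})"
      by (rule derivative_eq_intros deriv[OF s] refl | simp)+
    have "K * exp (- \<gamma> * s) \<le> K * exp (- \<eta> * s)"
      using \<open>0 \<le> K\<close> \<open>\<eta> \<le> \<gamma>\<close> s by (intro mult_left_mono) (auto intro: mult_right_mono)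
    also have "\<dots> \<le> (c - \<eta>) * B * exp (- \<eta> * s)"
      using KB by (intro mult_right_mono) auto
    finally show "y' s + \<eta> * B * exp (- \<eta> * s) \<le> - c * ?w s"
      using ineq[OF s] by (simp add: algebra_simps)
  qed (use \<open>0 \<le> t\<close> in auto)
  moreover have "?w 0 * exp (- c * (t - 0)) \<le> 0" by (simp add: B_def mult_nonpos_nonneg)
  ultimately have "?w t \<le> 0" by linarith
  then show ?thesis by (simp add: B_def)
qed

lemma continuous_on_from_derivative:
  fixes f f' :: "real \<Rightarrow> real"
  assumes "\<And>s. 0 \<le> s \<Longrightarrow> (f has_real_derivative f' s) (at s within {0..})"
  shows "continuous_on {0..} f"
  unfolding continuous_on_eq_continuous_within using assms by (blast intro: DERIV_continuous)

text \<open>A solution of the linear equation \<open>f' = a f\<close> with \<open>a\<close> bounded above keeps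
  the sign of \<open>f 0 \<ge> 0\<close>: at a zero \<open>x\<close>, \<open>f\<^sup>2\<close> obeys \<open>(f\<^sup>2)' \<le> 2U f\<^sup>2\<close>, so it
  stays zero after \<open>x\<close>.\<close>
lemma linear_ode_preserves_sign:
  fixes f a :: "real \<Rightarrow> real"
  assumes "0 \<le> t" "0 \<le> f 0"
    and deriv: "\<And>s. 0 \<le> s \<Longrightarrow> s \<le> t \<Longrightarrow> (f has_real_derivative a s * f s) (at s within {0..})"
    and bound: "\<And>s. 0 \<le> s \<Longrightarrow> s \<le> t \<Longrightarrow> a s \<le> U"
  shows "0 \<le> f t"
proof (rule ccontr)
  assume neg: "\<not> 0 \<le> f t"
  have "continuous_on {0..t} f"
    unfolding continuous_on_eq_continuous_within
    using deriv by (meson DERIV_continuous DERIV_subset atLeastAtMost_iff atLeast_iff subsetI order_trans)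
  then obtain x where x: "0 \<le> x" "x \<le> t" "f x = 0"
    using IVT2'[of f t 0 0] neg \<open>0 \<le> f 0\<close> \<open>0 \<le> t\<close> by auto
  have "(\<lambda>s. f s ^ 2) t \<le> (\<lambda>s. f s ^ 2) x * exp (- (- 2 * U) * (t - x))"
  proof (rule linear_decay[OF x(1,2), where y' = "\<lambda>s. 2 * f s * (a s * f s)"])
    fix s assume s: "x \<le> s" "s \<le> t"
    show "((\<lambda>s. f s ^ 2) has_real_derivative 2 * f s * (a s * f s)) (at s within {0..})"
      using s x by (auto intro!: derivative_eq_intros deriv)
    have "a s * f s ^ 2 \<le> U * f s ^ 2"
      using bound[of s] s x by (intro mult_right_mono) auto
    then show "2 * f s * (a s * f s) \<le> - (- 2 * U) * f s ^ 2"
      by (simp add: power2_eq_square algebra_simps)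
  qed
  then have "f t ^ 2 \<le> 0" using x by simp
  then show False using neg by simp
qed

text \<open>Otherwise the first time \<open>c\<close> is reached
  would contradict the hypothesis.\<close>
lemma continuous_barrier:
  fixes f :: "real \<Rightarrow> real"
  assumes cont: "continuous_on {0..} f" and start: "c < f 0"
    and step: "\<And>T. 0 \<le> T \<Longrightarrow> \<forall>s\<in>{0..T}. c \<le> f s \<Longrightarrow> c < f T"
    and "0 \<le> t"
  shows "c < f t"
proof (rule ccontr)
  assume "\<not> c < f t"
  define Z where "Z = {0..t} \<inter> f -` {..c}"
  have "Z \<noteq> {}" using \<open>0 \<le> t\<close> \<open>\<not> c < f t\<close> by (auto simp: Z_def)
  moreover have bdd: "bdd_below Z" by (rule bdd_belowI[of _ 0]) (auto simp: Z_def)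
  moreover have "closed Z" unfolding Z_def
    by (rule continuous_closed_preimage) (auto intro: continuous_on_subset[OF cont])
  ultimately have first: "Inf Z \<in> Z" by (rule closed_contains_Inf)
  have before: "c < f s" if "0 \<le> s" "s < Inf Z" for s
    using cInf_lower[OF _ bdd, of s] that \<open>Inf Z \<in> Z\<close> by (force simp: Z_def)
  obtain x where x: "0 \<le> x" "x \<le> Inf Z" "f x = c"
    using IVT2'[of f "Inf Z" c 0] first start
      continuous_on_subset[OF cont, of "{0..Inf Z}"] by (auto simp: Z_def)
  have "x = Inf Z" using before[of x] x by force
  then have "\<forall>s\<in>{0..Inf Z}. c \<le> f s"
    using before x by (metis atLeastAtMost_iff less_eq_real_def order_less_le)
  then have "c < f (Inf Z)" using step first by (auto simp: Z_def)
  then show False using first by (auto simp: Z_def)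
qed

lemma sigma_bounds:
  fixes \<sigma> :: "real \<Rightarrow> real"
  assumes deriv: "\<forall>x\<ge>0. \<exists>s. (\<sigma> has_real_derivative s) (at x within {0..}) \<and> 0 \<le> s \<and> s \<le> C"
    and id: "\<forall>x. 0 \<le> x \<and> x \<le> M \<longrightarrow> \<sigma> x = x"
    and const: "\<forall>x. x > M + 1 \<longrightarrow> \<sigma> x = M + 1"
    and q: "0 \<le> q" "q \<le> M" "q \<le> x"
  shows "q \<le> \<sigma> x \<and> \<sigma> x \<le> M + 1"
proof -
  from deriv obtain \<sigma>' where \<sigma>': "\<And>x. 0 \<le> x \<Longrightarrow> (\<sigma> has_real_derivative \<sigma>' x) (at x within {0..}) \<and> 0 \<le> \<sigma>' x"
    by metis
  have mono: "\<sigma> u \<le> \<sigma> v" if "0 \<le> u" "u \<le> v" for u v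
    by (rule nondecreasing_from_derivative[OF that, where f' = \<sigma>']) (use \<sigma>' that in auto)
  have "q = \<sigma> q" using id q by auto
  also have "\<dots> \<le> \<sigma> x" using mono q by auto
  finally have "q \<le> \<sigma> x" .
  moreover have "\<sigma> x \<le> M + 1"
  proof (cases "x \<le> M + 2")
    case True
    then have "\<sigma> x \<le> \<sigma> (M + 2)" using mono q by auto
    then show ?thesis using const by auto
  qed (use const in auto)
  ultimately show ?thesis by simp
qed

text \<open>While \<open>Q \<ge> 0\<close>, the
  linear equation for \<open>S\<close> keeps \<open>S \<ge> 0\<close>; then \<open>(d/m - Q)' \<le> -m (d/m - Q)\<close>
  keeps \<open>Q \<ge> d/m > 0\<close>, so by continuous induction \<open>Q\<close> never reaches \<open>0\<close>.\<close>
lemma invariant_region: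
  fixes \<alpha> k d m b :: real and \<sigma> S Q :: "real \<Rightarrow> real"
  assumes pos: "k > 0" "d > 0" "m > 0" "b > 1"
    and sigma_nonneg: "\<forall>x\<ge>0. \<sigma> x \<ge> 0"
    and S_ode: "\<forall>t\<ge>0. (S has_real_derivative (\<alpha> - k * \<sigma> (Q t)) * S t) (at t within {0..})"
    and Q_ode: "\<forall>t\<ge>0. (Q has_real_derivative d - m * Q t + k * (b - 1) * \<sigma> (Q t) * S t) (at t within {0..})"
    and init: "0 \<le> S 0" "d / m \<le> Q 0"
    and "0 \<le> t"
  shows "0 \<le> S t \<and> d / m \<le> Q t"
proof -
  have bootstrap: "0 \<le> S T \<and> d / m \<le> Q T" if T: "0 \<le> T" "\<forall>s\<in>{0..T}. 0 \<le> Q s" for T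
  proof -
    have S_nonneg: "0 \<le> S s" if "0 \<le> s" "s \<le> T" for s
      by (rule linear_ode_preserves_sign[where f = S and a = "\<lambda>s. \<alpha> - k * \<sigma> (Q s)" and U = \<alpha>])
         (use S_ode sigma_nonneg T that pos init in auto)
    have "(\<lambda>s. d / m - Q s) T \<le> (\<lambda>s. d / m - Q s) 0 * exp (- m * (T - 0))"
    proof (rule linear_decay[where y' = "\<lambda>s. - (d - m * Q s + k * (b - 1) * \<sigma> (Q s) * S s)"])
      fix s assume s: "0 \<le> s" "s \<le> T"
      show "((\<lambda>s. d / m - Q s) has_real_derivative - (d - m * Q s + k * (b - 1) * \<sigma> (Q s) * S s))
          (at s within {0..})"
        using Q_ode s by (auto intro!: derivative_eq_intros)
      have "0 \<le> k * (b - 1) * \<sigma> (Q s) * S s"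
        using pos sigma_nonneg T S_nonneg s by auto
      then show "- (d - m * Q s + k * (b - 1) * \<sigma> (Q s) * S s) \<le> - m * (d / m - Q s)"
        using pos by (simp add: algebra_simps)
    qed (use T in auto)
    moreover have "(d / m - Q 0) * exp (- m * (T - 0)) \<le> 0"
      using init by (simp add: mult_nonpos_nonneg)
    ultimately have "Q T \<ge> d / m" by linarith
    then show ?thesis using S_nonneg T by simp
  qed
  have Q_pos: "0 < Q s" if "0 \<le> s" for s
  proof (rule continuous_barrier[OF _ _ _ that])
    show "continuous_on {0..} Q" by (rule continuous_on_from_derivative) (use Q_ode in auto)
    have "0 < d / m" using pos by simp
    then show "0 < Q 0" "\<And>T. 0 \<le> T \<Longrightarrow> \<forall>s\<in>{0..T}. 0 \<le> Q s \<Longrightarrow> 0 < Q T"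
      using init bootstrap by (auto intro: less_le_trans)
  qed
  show ?thesis using bootstrap[OF \<open>0 \<le> t\<close>] Q_pos by (simp add: less_imp_le)
qed

text \<open>Decay of the susceptible component: once \<open>S \<ge> 0\<close> and \<open>\<sigma>(Q) \<ge> q\<close>,
  the equation for \<open>S\<close> gives \<open>S' \<le> -(k q - \<alpha>) S\<close>.\<close>
lemma susceptible_decay:
  fixes \<alpha> k q t :: real and \<sigma> S Q :: "real \<Rightarrow> real"
  assumes "0 < k" "0 \<le> t"
    and S_ode: "\<forall>t\<ge>0. (S has_real_derivative (\<alpha> - k * \<sigma> (Q t)) * S t) (at t within {0..})"
    and S_nonneg: "\<And>s. 0 \<le> s \<Longrightarrow> 0 \<le> S s"
    and sigma_lower: "\<And>s. 0 \<le> s \<Longrightarrow> q \<le> \<sigma> (Q s)"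
  shows "S t \<le> S 0 * exp (- (k * q - \<alpha>) * t)"
proof -
  have "S t \<le> S 0 * exp (- (k * q - \<alpha>) * (t - 0))"
  proof (rule linear_decay[where y' = "\<lambda>s. (\<alpha> - k * \<sigma> (Q s)) * S s"])
    fix s assume s: "0 \<le> s" "s \<le> t"
    show "(S has_real_derivative (\<alpha> - k * \<sigma> (Q s)) * S s) (at s within {0..})"
      using S_ode s by auto
    have "k * q \<le> k * \<sigma> (Q s)"
      using sigma_lower[OF s(1)] \<open>0 < k\<close> by (intro mult_left_mono) auto
    then show "(\<alpha> - k * \<sigma> (Q s)) * S s \<le> - (k * q - \<alpha>) * S s"
      using S_nonneg[OF s(1)] by (intro mult_right_mono) auto
  qed (use \<open>0 \<le> t\<close> in auto)
  then show ?thesis by simp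
qed

text \<open>Decay of \<open>Q - d/m\<close>: with \<open>0 \<le> \<sigma>(Q) \<le> L\<close> the infection term is at most
  \<open>k (b - 1) L S(0) exp (-\<gamma> t)\<close>, so \<open>Q - d/m\<close> satisfies a forced decay
  inequality with rate \<open>m\<close>.\<close>
lemma infected_decay:
  fixes k d m b L \<gamma> \<eta> t :: real and \<sigma> S Q :: "real \<Rightarrow> real"
  assumes "0 < k" "0 < m" "1 < b" "0 \<le> t" "\<eta> \<le> \<gamma>" "\<eta> < m"
    and Q_ode: "\<forall>t\<ge>0. (Q has_real_derivative d - m * Q t + k * (b - 1) * \<sigma> (Q t) * S t) (at t within {0..})"
    and S_bounds: "\<And>s. 0 \<le> s \<Longrightarrow> 0 \<le> S s \<and> S s \<le> S 0 * exp (- \<gamma> * s)"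
    and sigma_bounds: "\<And>s. 0 \<le> s \<Longrightarrow> 0 \<le> \<sigma> (Q s) \<and> \<sigma> (Q s) \<le> L"
  shows "Q t - d / m \<le> max (Q 0 - d / m) (k * (b - 1) * L * S 0 / (m - \<eta>)) * exp (- \<eta> * t)"
proof -
  have "0 \<le> L" "0 \<le> S 0" using sigma_bounds[of 0] S_bounds[of 0] by auto
  then have K: "0 \<le> k * (b - 1) * L * S 0" using \<open>0 < k\<close> \<open>1 < b\<close> by simp
  show ?thesis
  proof (rule forced_linear_decay[OF \<open>0 \<le> t\<close> K \<open>\<eta> \<le> \<gamma>\<close> \<open>\<eta> < m\<close>,
        where y = "\<lambda>s. Q s - d / m" and y' = "\<lambda>s. d - m * Q s + k * (b - 1) * \<sigma> (Q s) * S s"])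
    fix s assume s: "0 \<le> s" "s \<le> t"
    show "((\<lambda>s. Q s - d / m) has_real_derivative d - m * Q s + k * (b - 1) * \<sigma> (Q s) * S s) (at s within {0..})"
      using Q_ode s by (auto intro!: derivative_eq_intros)
    have "k * (b - 1) * \<sigma> (Q s) * S s \<le> k * (b - 1) * L * (S 0 * exp (- \<gamma> * s))"
      using sigma_bounds[OF s(1)] S_bounds[OF s(1)] \<open>0 < k\<close> \<open>1 < b\<close>
      by (intro mult_mono mult_left_mono) auto
    then show "d - m * Q s + k * (b - 1) * \<sigma> (Q s) * S s
        \<le> - m * (Q s - d / m) + k * (b - 1) * L * S 0 * exp (- \<gamma> * s)"
      using \<open>0 < m\<close> by (simp add: algebra_simps)
  qed
qed

theorem mainTheorem5:
  fixes \<alpha> k d m M b C :: real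
    and \<sigma> S Q :: "real \<Rightarrow> real"
  assumes pos: "\<alpha> > 0" "k > 0" "d > 0" "m > 0" "M > 0"
    and sigma_smooth: "smooth_nonneg \<sigma>"
    and sigma_range: "\<forall>x\<ge>0. \<sigma> x \<ge> 0"
    and sigma_id: "\<forall>x. 0 \<le> x \<and> x \<le> M \<longrightarrow> \<sigma> x = x"
    and sigma_const: "\<forall>x. x > M + 1 \<longrightarrow> \<sigma> x = M + 1"
    and C_gt: "C > 1"
    and sigma_deriv: "\<forall>x\<ge>0. \<exists>s. (\<sigma> has_real_derivative s) (at x within {0..}) \<and> 0 \<le> s \<and> s \<le> C"
    and b_gt: "b > 1"
    and gamma_pos: "k * d / m - \<alpha> > 0"
    and M_gt: "M > d / m"
    and S_ode: "\<forall>t\<ge>0. (S has_real_derivative (\<alpha> - k * \<sigma> (Q t)) * S t) (at t within {0..})"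
    and Q_ode: "\<forall>t\<ge>0. (Q has_real_derivative d - m * Q t + k * (b - 1) * \<sigma> (Q t) * S t) (at t within {0..})"
    and S0: "0 \<le> S 0" "S 0 \<le> (m * M - d) / (k * (b - 1) * M)"
    and Q0: "d / m \<le> Q 0" "Q 0 \<le> M"
  shows "\<exists>c>0. \<forall>t\<ge>0. norm ((S t, Q t) - (0, d / m))
            \<le> c * exp (- (min (k * d / m - \<alpha>) (m / 2)) * t)"
proof -
  define \<gamma> where "\<gamma> = k * d / m - \<alpha>"
  define \<eta> where "\<eta> = min \<gamma> (m / 2)"
  define B where "B = max (Q 0 - d / m) (k * (b - 1) * (M + 1) * S 0 / (m - \<eta>))"
  have inv: "0 \<le> S t \<and> d / m \<le> Q t" if "0 \<le> t" for t
    using invariant_region[OF pos(2-4) b_gt sigma_range S_ode Q_ode S0(1) Q0(1) that] .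
  have sigma: "d / m \<le> \<sigma> (Q t) \<and> \<sigma> (Q t) \<le> M + 1" if "0 \<le> t" for t
    using sigma_bounds[OF sigma_deriv sigma_id sigma_const, where q = "d / m" and x = "Q t"]
      inv[OF that] M_gt pos by simp
  have S_decay: "S t \<le> S 0 * exp (- \<gamma> * t)" if "0 \<le> t" for t
  proof -
    have "S t \<le> S 0 * exp (- (k * (d / m) - \<alpha>) * t)"
      by (rule susceptible_decay[where \<sigma> = \<sigma> and Q = Q]) (use pos(2) that S_ode inv sigma in auto)
    then show ?thesis by (simp add: \<gamma>_def)
  qed
  have rates: "\<eta> \<le> \<gamma>" "\<eta> < m" using pos(4) by (auto simp: \<eta>_def)
  have sigma_on_orbit: "0 \<le> \<sigma> (Q s) \<and> \<sigma> (Q s) \<le> M + 1" if "0 \<le> s" for s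
  proof -
    have "0 < d / m" using pos by simp
    then show ?thesis using sigma[OF that] by auto
  qed
  have Q_decay: "Q t - d / m \<le> B * exp (- \<eta> * t)" if "0 \<le> t" for t
    unfolding B_def
    by (rule infected_decay[OF pos(2,4) b_gt that rates Q_ode]) (use inv S_decay sigma_on_orbit in auto)
  show ?thesis
  proof (intro exI[of _ "S 0 + B + 1"] conjI allI impI)
    show "0 < S 0 + B + 1" using S0 Q0 by (simp add: B_def le_max_iff_disj add_nonneg_pos)
    fix t :: real assume t: "0 \<le> t"
    have "norm ((S t, Q t) - (0, d / m)) \<le> norm (S t) + norm (Q t - d / m)"
      using norm_Pair_le[of "S t" "Q t - d / m"] by simp
    also have "\<dots> \<le> S 0 * exp (- \<gamma> * t) + B * exp (- \<eta> * t)"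
      using inv[OF t] S_decay[OF t] Q_decay[OF t] by simp
    also have "\<dots> \<le> S 0 * exp (- \<eta> * t) + B * exp (- \<eta> * t)"
      using S0 rates t by (intro add_right_mono mult_left_mono) (auto intro: mult_right_mono)
    also have "\<dots> \<le> (S 0 + B + 1) * exp (- \<eta> * t)" by (simp add: algebra_simps)
    finally show "norm ((S t, Q t) - (0, d / m)) \<le> (S 0 + B + 1) * exp (- min (k * d / m - \<alpha>) (m / 2) * t)"
      by (simp add: \<eta>_def \<gamma>_def)
  qed
qed

end
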